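(* Fix a single slot. Let $\beta\in(0,1]$, let $K\ge 1$, and let $J_{\max}=\min(K,\lfloor 1/\beta\rfloor)$. Let $X_1,\dots,X_K$ be i.i.d. nonnegative random variables with $\mathbb{E}X_1=1$, let $r_1,\dots,r_K\ge 0$ and $T_1,\dots,T_K>0$ be constants, and set $s_k=r_kX_k/T_k$, $\bar s_k=\mathbb{E}s_k=r_k/T_k$. Let $(k_1,\dots,k_K)$ be a permutation of $\{1,\dots,K\}$ with $\bar s_{k_1}\ge \bar s_{k_2}\ge\dots\ge\bar s_{k_K}$ (the probing order). For $j\ge 1$ define the reward $y_j=(1-j\beta)\,w_j$ with $w_j=\max(s_{k_1},\dots,s_{k_j})$, and $w_0=0$, $y_0=0$. For $j$ with $j+1\le K$ define the event $$\mathcal{E}_j=\Big\{\,y_j \ \ge\ \mathbb{E}\big[y_{j+1}\,\big|\,s_{k_1},\dots,s_{k_j}\big]\Big\}=\Big\{(1-j\beta)w_j\ \ge\ (1-(j+1)\beta)\,\phi_{j+1}(w_j)\Big\},$$ where $\phi_{i}(w)=\mathbb{E}[\max(w,s_{k_i})]$ for deterministic $w\ge 0$. Then for every $j\ge 0$ with $j+2\le K$ and $(j+1)\beta\le 1$ (in particular for $0\le j\le J_{\max}-2$ whenever $J_{\max}<K$ or $j+2\le K$), one has $\mathcal{E}_j\subseteq\mathcal{E}_{j+1}$; i.e., the sequential probing-and-scheduling stopping problem with rewards $y_j$ is a monotone stopping problem.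
   Context: This models one time slot of a downlink with $K$ users, where probing the channel of one user consumes a fraction $\beta$ of the slot; after probing $j$ users (in the order $k_1,k_2,\dots$) and stopping, the scheduler transmits to the best probed user and earns $(1-j\beta)$ times its throughput-normalized rate. A stopping problem is called monotone if the events $\mathcal{E}_j$ ("stopping now is at least as good as continuing exactly one more stage and then stopping") are nested increasing, $\mathcal{E}_j\subseteq\mathcal{E}_{j+1}$. *)

theory Defs
  imports "HOL-Probability.Probability"
begin

definition norm_rate :: "(nat \<Rightarrow> 'a \<Rightarrow> real) \<Rightarrow> (nat \<Rightarrow> real) \<Rightarrow> (nat \<Rightarrow> real) \<Rightarrow> nat \<Rightarrow> 'a \<Rightarrow> real" where
  "norm_rate X r T i \<omega> = r i * X i \<omega> / T i"

definition mean_rate :: "(nat \<Rightarrow> real) \<Rightarrow> (nat \<Rightarrow> real) \<Rightarrow> nat \<Rightarrow> real" where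
  "mean_rate r T i = r i / T i"

definition best_probed :: "(nat \<Rightarrow> 'a \<Rightarrow> real) \<Rightarrow> (nat \<Rightarrow> real) \<Rightarrow> (nat \<Rightarrow> real) \<Rightarrow> (nat \<Rightarrow> nat) \<Rightarrow> nat \<Rightarrow> 'a \<Rightarrow> real" where
  "best_probed X r T k j \<omega> = (if j = 0 then 0 else Max ((\<lambda>i. norm_rate X r T (k i) \<omega>) ` {1..j}))"

definition phi :: "'a measure \<Rightarrow> (nat \<Rightarrow> 'a \<Rightarrow> real) \<Rightarrow> (nat \<Rightarrow> real) \<Rightarrow> (nat \<Rightarrow> real) \<Rightarrow> (nat \<Rightarrow> nat) \<Rightarrow> nat \<Rightarrow> real \<Rightarrow> real" where
  "phi M X r T k i w = (\<integral>\<omega>. max w (norm_rate X r T (k i) \<omega>) \<partial>M)"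

definition stop_event :: "'a measure \<Rightarrow> (nat \<Rightarrow> 'a \<Rightarrow> real) \<Rightarrow> (nat \<Rightarrow> real) \<Rightarrow> (nat \<Rightarrow> real) \<Rightarrow> (nat \<Rightarrow> nat) \<Rightarrow> real \<Rightarrow> nat \<Rightarrow> 'a set" where
  "stop_event M X r T k \<beta> j =
     {\<omega> \<in> space M. (1 - real j * \<beta>) * best_probed X r T k j \<omega>
        \<ge> (1 - real (j + 1) * \<beta>) * phi M X r T k (j + 1) (best_probed X r T k j \<omega>)}"

end

theory Submission
  imports Defs
begin

(*
  Write phi_{i}(w) = w + g_i(w), where g_i(w) = E[max(w, s_{k_i})] - w is the
  expected gain of probing user k_i when the best rate seen so far is w.  Then
  E_j reads  beta w_j >= (1 - (j+1) beta) g_{j+1}(w_j).  The gain is nonnegative and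
  antitone both in w and in the random rate, so w_j <= w_{j+1} together with
  s_{k_{j+2}} ~ sbar_{k_{j+2}} X_1 <= sbar_{k_{j+1}} X_1 (probing order) gives
  g_{j+2}(w_{j+1}) <= g_{j+1}(w_j); a one-line real inequality then turns E_j into
  E_{j+1}.
*)

definition expected_gain :: "'a measure \<Rightarrow> ('a \<Rightarrow> real) \<Rightarrow> real \<Rightarrow> real" where
  "expected_gain M Y v = (\<integral>\<omega>. max v (Y \<omega>) \<partial>M) - v"

lemma expected_gain_nonneg:
  assumes "prob_space M" and "integrable M Y"
  shows "0 \<le> expected_gain M Y v"
proof -
  interpret prob_space M by fact
  have "(\<integral>\<omega>. v \<partial>M) \<le> (\<integral>\<omega>. max v (Y \<omega>) \<partial>M)"
    by (rule integral_mono) (use assms(2) in auto)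
  thus ?thesis by (simp add: expected_gain_def prob_space)
qed

lemma expected_gain_antimono:
  assumes "prob_space M" and "integrable M Y" and "integrable M Y'"
    and Y'_le: "\<And>\<omega>. \<omega> \<in> space M \<Longrightarrow> Y' \<omega> \<le> Y \<omega>" and "v \<le> v'"
  shows "expected_gain M Y' v' \<le> expected_gain M Y v"
proof -
  interpret prob_space M by fact
  have int: "integrable M (\<lambda>\<omega>. max u (Z \<omega>) - u)" if "integrable M Z" for Z :: "'a \<Rightarrow> real" and u
    using that by auto
  have gain_int: "expected_gain M Z u = (\<integral>\<omega>. max u (Z \<omega>) - u \<partial>M)" if "integrable M Z" for Z u
    using that by (simp add: expected_gain_def Bochner_Integration.integral_diff prob_space)
  have "(\<integral>\<omega>. max v' (Y' \<omega>) - v' \<partial>M) \<le> (\<integral>\<omega>. max v (Y \<omega>) - v \<partial>M)"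
  proof (rule integral_mono)
    fix \<omega> assume "\<omega> \<in> space M"
    with Y'_le \<open>v \<le> v'\<close> show "max v' (Y' \<omega>) - v' \<le> max v (Y \<omega>) - v"
      by (smt (verit))
  qed (use assms int in auto)
  thus ?thesis using assms by (simp add: gain_int)
qed

lemma integral_eq_if_same_distr:
  fixes Y Z :: "'a \<Rightarrow> real" and f :: "real \<Rightarrow> real"
  assumes "Y \<in> borel_measurable M" "Z \<in> borel_measurable M" "f \<in> borel_measurable borel"
    and "distr M borel Y = distr M borel Z"
  shows "(\<integral>\<omega>. f (Y \<omega>) \<partial>M) = (\<integral>\<omega>. f (Z \<omega>) \<partial>M)"
  using assms by (metis integral_distr)

lemma phi_eq_gain:
  assumes "X (k i) \<in> borel_measurable M" "X 1 \<in> borel_measurable M"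
    and "distr M borel (X (k i)) = distr M borel (X 1)"
  shows "phi M X r T k i v = v + expected_gain M (\<lambda>\<omega>. mean_rate r T (k i) * X 1 \<omega>) v"
proof -
  have "phi M X r T k i v = (\<integral>\<omega>. max v (mean_rate r T (k i) * X (k i) \<omega>) \<partial>M)"
    by (simp add: phi_def norm_rate_def mean_rate_def)
  also have "\<dots> = (\<integral>\<omega>. max v (mean_rate r T (k i) * X 1 \<omega>) \<partial>M)"
    using assms by (intro integral_eq_if_same_distr) auto
  finally show ?thesis by (simp add: expected_gain_def)
qed

text \<open>The best probed rate w_j grows with j (for j = 0 because rates are nonnegative).\<close>
lemma best_probed_Suc_ge:
  assumes "0 \<le> norm_rate X r T (k 1) \<omega>"
  shows "best_probed X r T k j \<omega> \<le> best_probed X r T k (Suc j) \<omega>"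
  using assms by (cases "j = 0") (auto simp: best_probed_def intro!: Max_mono)

lemma one_stage_lookahead_step:
  fixes \<beta> W W' g g' :: real
  assumes "0 < \<beta>" "real (j + 1) * \<beta> \<le> 1" "0 \<le> g'" "g' \<le> g" "W \<le> W'"
    and stop: "(1 - real (j + 1) * \<beta>) * (W + g) \<le> (1 - real j * \<beta>) * W"
  shows "(1 - real (j + 2) * \<beta>) * (W' + g') \<le> (1 - real (j + 1) * \<beta>) * W'"
proof -
  have "(1 - real (j + 2) * \<beta>) * g' \<le> (1 - real (j + 1) * \<beta>) * g'"
    using assms by (intro mult_right_mono) auto
  also have "\<dots> \<le> (1 - real (j + 1) * \<beta>) * g"
    using assms by (intro mult_left_mono) auto
  also have "\<dots> \<le> \<beta> * W"
    using stop by (simp add: algebra_simps)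
  also have "\<dots> \<le> \<beta> * W'"
    using assms by simp
  finally show ?thesis by (simp add: algebra_simps)
qed

theorem theorem1:
  fixes M :: "'a measure" and X :: "nat \<Rightarrow> 'a \<Rightarrow> real"
    and r T :: "nat \<Rightarrow> real" and k :: "nat \<Rightarrow> nat"
    and \<beta> :: real and K :: nat
  assumes "prob_space M"
    and "0 < \<beta>" "\<beta> \<le> 1" "1 \<le> K"
    and rv: "\<And>i. i \<in> {1..K} \<Longrightarrow> X i \<in> borel_measurable M"
    and indep: "prob_space.indep_vars M (\<lambda>_. borel) X {1..K}"
    and ident: "\<And>i. i \<in> {1..K} \<Longrightarrow> distr M borel (X i) = distr M borel (X 1)"
    and nonneg: "\<And>i \<omega>. i \<in> {1..K} \<Longrightarrow> \<omega> \<in> space M \<Longrightarrow> 0 \<le> X i \<omega>"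
    and integr: "integrable M (X 1)"
    and mean1: "(\<integral>\<omega>. X 1 \<omega> \<partial>M) = 1"
    and r_nonneg: "\<And>i. i \<in> {1..K} \<Longrightarrow> 0 \<le> r i"
    and T_pos: "\<And>i. i \<in> {1..K} \<Longrightarrow> 0 < T i"
    and perm: "bij_betw k {1..K} {1..K}"
    and sorted: "\<And>i j. 1 \<le> i \<Longrightarrow> i \<le> j \<Longrightarrow> j \<le> K \<Longrightarrow> mean_rate r T (k j) \<le> mean_rate r T (k i)"
  shows "\<forall>j. j + 2 \<le> K \<and> real (j + 1) * \<beta> \<le> 1 \<longrightarrow>
           stop_event M X r T k \<beta> j \<subseteq> stop_event M X r T k \<beta> (j + 1)"
proof (intro allI impI subsetI)
  fix j \<omega>
  assume j: "j + 2 \<le> K \<and> real (j + 1) * \<beta> \<le> 1" and \<omega>: "\<omega> \<in> stop_event M X r T k \<beta> j"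
  define a where "a i = mean_rate r T (k i)" for i
  define gain where "gain i = expected_gain M (\<lambda>\<omega>. a i * X 1 \<omega>)" for i
  define w where "w i = best_probed X r T k i \<omega>" for i
  have k_in: "i \<in> {1..K} \<Longrightarrow> k i \<in> {1..K}" for i using perm by (auto simp: bij_betw_def)
  have \<omega>_space: "\<omega> \<in> space M" using \<omega> by (simp add: stop_event_def)
  have phi: "phi M X r T k i v = v + gain i v" if "i \<in> {1..K}" for i v
    unfolding gain_def a_def
    using k_in[OF that] \<open>1 \<le> K\<close> by (intro phi_eq_gain rv ident) auto
  have "k 1 \<in> {1..K}" using k_in \<open>1 \<le> K\<close> by simp
  hence "0 \<le> norm_rate X r T (k 1) \<omega>"
    unfolding norm_rate_def using r_nonneg T_pos nonneg \<omega>_space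
    by (intro divide_nonneg_pos mult_nonneg_nonneg) auto
  hence w_le: "w j \<le> w (j + 1)" by (simp add: w_def best_probed_Suc_ge)
  have X1_nonneg: "\<omega>' \<in> space M \<Longrightarrow> 0 \<le> X 1 \<omega>'" for \<omega>' using nonneg \<open>1 \<le> K\<close> by simp
  have "gain (j + 2) (w (j + 1)) \<le> gain (j + 1) (w j)"
    unfolding gain_def using sorted[of "j + 1" "j + 2"] j w_le X1_nonneg integr
    by (intro expected_gain_antimono[OF \<open>prob_space M\<close>]) (auto simp: a_def mult_right_mono)
  moreover have "0 \<le> gain (j + 2) (w (j + 1))"
    unfolding gain_def using integr by (intro expected_gain_nonneg[OF \<open>prob_space M\<close>]) auto
  moreover have "(1 - real (j + 1) * \<beta>) * (w j + gain (j + 1) (w j)) \<le> (1 - real j * \<beta>) * w j"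
    using \<omega> j by (simp add: stop_event_def phi w_def)
  ultimately show "\<omega> \<in> stop_event M X r T k \<beta> (j + 1)"
    using one_stage_lookahead_step[OF \<open>0 < \<beta>\<close>] j w_le \<omega>_space
    by (simp add: stop_event_def phi w_def)
qed

end
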